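(* Let $d\ge2$ and let $A,B$ be $d$-dimensional systems, with $\{\Phi^y_{AB}\}_{y=1}^{d^2}$ the $d^2$ qudit Bell states (an orthonormal basis of maximally entangled pure states, as projectors). The POVM $\{P^y_{AB}\}_{y=1}^{d^2}$ with $P^y_{AB}=\frac12\Phi^y_{AB}+\frac{1}{2d^2}I_{AB}$ is two-extendible, with two-extension $G^{y,y'}_{ABE}=\frac{1}{2d^2}\Phi^y_{AB}\otimes I_E+\frac{1}{2d^2}\Phi^{y'}_{AE}\otimes I_B$, $y,y'\in\{1,\dots,d^2\}$; but it does not belong to $\operatorname{1WL}$ (its elements do not have positive partial transpose).
   Context: A bipartite POVM $\{P^y_{AB}\}_{y\in\mathcal{Y}}$ is two-extendible if there exists a POVM $\{G^{y,y'}_{ABE}\}_{y,y'\in\mathcal{Y}}$ on $ABE$, with $E\cong B$, such that $\sum_{y'}G^{y,y'}_{ABE}=P^y_{AB}\otimes I_E$ for all $y$ and $F_{BE}G^{y,y'}_{ABE}F_{BE}^\dagger=G^{y',y}_{ABE}$ for all $y,y'$, where $F_{BE}$ is the swap unitary. A POVM is in $\operatorname{1WL}$ if $P^y_{AB}=\sum_{x}E^x_A\otimes F^{x,y}_B$ for a POVM $\{E^x_A\}_x$ and POVMs $\{F^{x,y}_B\}_y$ for each $x$. *)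

theory Defs
  imports Complex_Main
begin

text \<open>Operators on a finite-dimensional system whose computational basis is labelled
  by an index set S are represented by their matrix entries, i.e. functions
  'i => 'i => complex; only the entries with both indices in S are meaningful.
  A qudit has basis labels {..<d}; composite systems are labelled by tuples
  (a,b) for AB and (a,b,e) for ABE.\<close>

type_synonym 'i op = "'i \<Rightarrow> 'i \<Rightarrow> complex"

definition ident :: "'i op" where
  "ident i j = (if i = j then 1 else 0)"

text \<open>Positive semidefinite on index set S: the quadratic form v^* M v is a
  nonnegative real for every vector v (over the complex field this includes
  Hermiticity).\<close>
definition psd :: "'i set \<Rightarrow> 'i op \<Rightarrow> bool" where
  "psd S M \<longleftrightarrow> (\<forall>v :: 'i \<Rightarrow> complex.
      Im (\<Sum>i\<in>S. \<Sum>j\<in>S. cnj (v i) * M i j * v j) = 0 \<and>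
      Re (\<Sum>i\<in>S. \<Sum>j\<in>S. cnj (v i) * M i j * v j) \<ge> 0)"

definition is_POVM :: "'i set \<Rightarrow> 'y set \<Rightarrow> ('y \<Rightarrow> 'i op) \<Rightarrow> bool" where
  "is_POVM S Y P \<longleftrightarrow> finite Y \<and> (\<forall>y\<in>Y. psd S (P y)) \<and>
     (\<forall>i\<in>S. \<forall>j\<in>S. (\<Sum>y\<in>Y. P y i j) = ident i j)"

definition ptrans_B :: "('a \<times> 'b) op \<Rightarrow> ('a \<times> 'b) op" where
  "ptrans_B M = (\<lambda>(a, b) (a', b'). M (a, b') (a', b))"

definition PPT :: "('a \<times> 'b) set \<Rightarrow> ('a \<times> 'b) op \<Rightarrow> bool" where
  "PPT S M \<longleftrightarrow> psd S (ptrans_B M)"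

text \<open>Embeddings into ABE (indices (a,b,e)), with E a copy of B:
  M_AB tensor I_E, M_AE tensor I_B, and conjugation by the swap F_BE.\<close>
definition ext_AB :: "(nat \<times> nat) op \<Rightarrow> (nat \<times> nat \<times> nat) op" where
  "ext_AB M = (\<lambda>(a, b, e) (a', b', e'). M (a, b) (a', b') * ident e e')"

definition ext_AE :: "(nat \<times> nat) op \<Rightarrow> (nat \<times> nat \<times> nat) op" where
  "ext_AE M = (\<lambda>(a, b, e) (a', b', e'). M (a, e) (a', e') * ident b b')"

definition swap_BE :: "(nat \<times> nat \<times> nat) op \<Rightarrow> (nat \<times> nat \<times> nat) op" where
  "swap_BE G = (\<lambda>(a, b, e) (a', b', e'). G (a, e, b) (a', e', b'))"

definition two_extension ::
  "nat \<Rightarrow> 'y set \<Rightarrow> ('y \<Rightarrow> (nat \<times> nat) op) \<Rightarrow> ('y \<Rightarrow> 'y \<Rightarrow> (nat \<times> nat \<times> nat) op) \<Rightarrow> bool" where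
  "two_extension d Y P G \<longleftrightarrow>
     is_POVM ({..<d} \<times> {..<d} \<times> {..<d}) (Y \<times> Y) (\<lambda>(y, y'). G y y') \<and>
     (\<forall>y\<in>Y. \<forall>i\<in>{..<d} \<times> {..<d} \<times> {..<d}. \<forall>j\<in>{..<d} \<times> {..<d} \<times> {..<d}.
        (\<Sum>y'\<in>Y. G y y' i j) = ext_AB (P y) i j) \<and>
     (\<forall>y\<in>Y. \<forall>y'\<in>Y. \<forall>i\<in>{..<d} \<times> {..<d} \<times> {..<d}. \<forall>j\<in>{..<d} \<times> {..<d} \<times> {..<d}.
        swap_BE (G y y') i j = G y' y i j)"

definition two_extendible :: "nat \<Rightarrow> 'y set \<Rightarrow> ('y \<Rightarrow> (nat \<times> nat) op) \<Rightarrow> bool" where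
  "two_extendible d Y P \<longleftrightarrow> (\<exists>G. two_extension d Y P G)"

text \<open>One-way LOCC class 1WL: P^y = sum_x E^x_A tensor F^{x,y}_B, with a POVM E on A
  with finite outcome set X (labelled by naturals w.l.o.g.) and POVMs F^x on B.\<close>
definition in_1WL :: "nat \<Rightarrow> 'y set \<Rightarrow> ('y \<Rightarrow> (nat \<times> nat) op) \<Rightarrow> bool" where
  "in_1WL d Y P \<longleftrightarrow> (\<exists>(X :: nat set) E F.
     is_POVM {..<d} X E \<and> (\<forall>x\<in>X. is_POVM {..<d} Y (F x)) \<and>
     (\<forall>y\<in>Y. \<forall>a\<in>{..<d}. \<forall>b\<in>{..<d}. \<forall>a'\<in>{..<d}. \<forall>b'\<in>{..<d}.
        P y (a, b) (a', b') = (\<Sum>x\<in>X. E x a a' * F x y b b')))"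

text \<open>Generalized (Weyl-Heisenberg) qudit Bell states, labelled by y = (s,t) in
  {..<d} x {..<d}:  |Phi_(s,t)> = (Z^t X^s tensor I) (1/sqrt d) sum_i |i,i>,
  i.e. amplitude at basis vector |i,j> is omega^(t i) / sqrt d if i = j + s mod d,
  with omega = exp(2 pi i / d).  bell d y is the projector |Phi_y><Phi_y|.\<close>
definition bell_vec :: "nat \<Rightarrow> nat \<times> nat \<Rightarrow> nat \<times> nat \<Rightarrow> complex" where
  "bell_vec d y = (\<lambda>(i, j). case y of (s, t) \<Rightarrow>
      (if i = (j + s) mod d
       then cis (2 * pi * real (t * i) / real d) / complex_of_real (sqrt (real d))
       else 0))"

definition bell :: "nat \<Rightarrow> nat \<times> nat \<Rightarrow> (nat \<times> nat) op" where
  "bell d y = (\<lambda>u v. bell_vec d y u * cnj (bell_vec d y v))"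

definition bell_labels :: "nat \<Rightarrow> (nat \<times> nat) set" where
  "bell_labels d = {..<d} \<times> {..<d}"

definition bell_povm :: "nat \<Rightarrow> nat \<times> nat \<Rightarrow> (nat \<times> nat) op" where
  "bell_povm d y = (\<lambda>u v. bell d y u v / 2 + ident u v / (2 * of_nat d ^ 2))"

definition bell_ext :: "nat \<Rightarrow> nat \<times> nat \<Rightarrow> nat \<times> nat \<Rightarrow> (nat \<times> nat \<times> nat) op" where
  "bell_ext d y y' = (\<lambda>u v. ext_AB (bell d y) u v / (2 * of_nat d ^ 2)
                            + ext_AE (bell d y') u v / (2 * of_nat d ^ 2))"

end

theory Submission
  imports Defs "HOL-Library.Complex_Order" "HOL-Number_Theory.Cong"
begin

text \<open>The Bell projectors sum to the identity (orthogonality of the d-th roots of unity), so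
  P is a POVM and summing G over either outcome gives P \<otimes> I or I/2; G is positive as a sum
  of projectors tensored with identities, and swapping B and E exchanges its two terms.
  On the other hand, on the two vectors |s,1> and |s+1,0> the partial transpose of \<open>\<Phi>\<^sup>y\<close>
  is off-diagonal with entries of modulus 1/d, which the term I/(2d^2) cannot compensate:
  P^y is not PPT. Every element of a 1WL POVM is a sum of products E \<otimes> F of positive
  operators, and for such products the restriction of the partial transpose to vectors
  differing in both factors stays positive by Cauchy-Schwarz on the 2x2 blocks of E and F
  together with AM-GM; so P is not in 1WL.\<close>

lemma sum_cis_roots_of_unity:
  fixes d i i' :: nat
  assumes "i < d" "i' < d"
  shows "(\<Sum>t<d. cis (2 * pi * real (t * i) / real d) * cnj (cis (2 * pi * real (t * i') / real d)))
         = (if i = i' then of_nat d else 0)"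
proof -
  define z where "z = cis (2 * pi * (real i - real i') / real d)"
  have term_eq: "cis (2 * pi * real (t * i) / real d) * cnj (cis (2 * pi * real (t * i') / real d)) = z ^ t"
    for t
    unfolding z_def DeMoivre cis_cnj cis_mult by (simp add: algebra_simps diff_divide_distrib)
  show ?thesis
  proof (cases "i = i'")
    case True
    then show ?thesis unfolding term_eq z_def by simp
  next
    case False
    have "z ^ d = 1"
    proof -
      have "real d * (2 * pi * (real i - real i') / real d) = 2 * pi * of_int (int i - int i')"
        using assms by simp
      then show ?thesis unfolding z_def DeMoivre by simp
    qed
    moreover have "z \<noteq> 1"
    proof
      assume "z = 1"
      then have "cos (2 * pi * (real i - real i') / real d) = 1"
        unfolding z_def by (metis cis.sel(1) one_complex.sel(1))
      then obtain n :: int where "2 * pi * (real i - real i') / real d = of_int n * 2 * pi"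
        using cos_one_2pi_int by blast
      then have "pi * (real i - real i') = pi * (of_int n * real d)"
        using assms by (simp add: field_simps)
      then have n: "real i - real i' = of_int n * real d"
        by simp
      moreover have "\<bar>real i - real i'\<bar> < real d"
        using assms by linarith
      ultimately have "\<bar>of_int n\<bar> * real d < 1 * real d"
        by (simp add: abs_mult)
      then have "\<bar>real_of_int n\<bar> < 1"
        using mult_less_cancel_right[of "\<bar>of_int n\<bar>" "real d" 1] by simp
      then have "n = 0" by linarith
      with n False show False by simp
    qed
    ultimately have "(\<Sum>t<d. z ^ t) = 0" using geometric_sum[of z d] by simp
    then show ?thesis unfolding term_eq using False by simp
  qed
qed

lemma sum_bell_labels: "(\<Sum>y\<in>bell_labels d. f y) = (\<Sum>s<d. \<Sum>t<d. f (s, t))"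
  unfolding bell_labels_def by (simp add: sum.cartesian_product)

lemma card_bell_labels: "card (bell_labels d) = d * d"
  unfolding bell_labels_def by (simp add: card_cartesian_product)

lemma bell_entry:
  assumes "0 < d"
  shows "bell d (s, t) (i, j) (i', j') =
    (if i = (j + s) mod d \<and> i' = (j' + s) mod d
     then cis (2 * pi * real (t * i) / real d) * cnj (cis (2 * pi * real (t * i') / real d)) / of_nat d
     else 0)"
proof -
  define r where "r = complex_of_real (sqrt (real d))"
  have "r * r = of_nat d"
    unfolding r_def by (simp flip: of_real_mult)
  moreover have "cnj r = r" unfolding r_def by simp
  ultimately show ?thesis
    unfolding bell_def bell_vec_def r_def[symmetric] by simp
qed

lemma bell_vec_mult_cnj:
  assumes "i = (j + s) mod d"
  shows "bell_vec d (s, t) (i, j) * cnj (bell_vec d (s, t) (i, j)) = 1 / of_nat d"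
proof -
  define r where "r = complex_of_real (sqrt (real d))"
  have "r * r = of_nat d" "cnj r = r"
    unfolding r_def by (simp_all flip: of_real_mult)
  moreover have "cis \<theta> * cnj (cis \<theta>) = 1" for \<theta> by (simp add: cis_cnj cis_mult)
  ultimately show ?thesis
    unfolding bell_vec_def r_def[symmetric] using assms by simp
qed

lemma mod_add_right_cancel_nat:
  fixes d j j' s :: nat
  assumes "j < d" "j' < d" "(j + s) mod d = (j' + s) mod d"
  shows "j = j'"
  using assms cong_add_rcancel_nat[of j s j' d] unfolding cong_def by simp

lemma add_1_mod_neq_self:
  fixes d s :: nat
  assumes "2 \<le> d" "s < d"
  shows "(s + 1) mod d \<noteq> s"
  using assms by (cases "s + 1 = d") simp_all

lemma sum_shift_indicator:
  fixes d i j :: nat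
  assumes "i < d" "j < d"
  shows "(\<Sum>s<d. if i = (j + s) mod d then 1 else 0 :: complex) = 1"
proof -
  define s0 where "s0 = (i + d - j) mod d"
  have "s0 < d" using assms unfolding s0_def by simp
  have "(j + s0) mod d = (j + (i + d - j)) mod d"
    unfolding s0_def by (simp add: mod_add_right_eq)
  also have "j + (i + d - j) = i + d" using assms by simp
  finally have "(s0 + j) mod d = i" using assms by (simp add: add.commute)
  then have "i = (j + s) mod d \<longleftrightarrow> s = s0" if "s < d" for s
    using mod_add_right_cancel_nat[OF that \<open>s0 < d\<close>, of j] by (auto simp only: add.commute)
  then have "(\<Sum>s<d. if i = (j + s) mod d then 1 else 0 :: complex) = (\<Sum>s<d. if s = s0 then 1 else 0)"
    by (intro sum.cong) auto
  also have "\<dots> = 1" using \<open>s0 < d\<close> by simp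
  finally show ?thesis .
qed

lemma sum_bell_eq_ident:
  assumes "i < d" "j < d" "i' < d" "j' < d"
  shows "(\<Sum>y\<in>bell_labels d. bell d y (i, j) (i', j')) = ident (i, j) (i', j')"
proof -
  have "0 < d" using assms by simp
  have inner: "(\<Sum>t<d. bell d (s, t) (i, j) (i', j'))
      = (if i = (j + s) mod d \<and> i' = (j' + s) mod d then (if i = i' then 1 else 0) else 0)" for s
  proof (cases "i = (j + s) mod d \<and> i' = (j' + s) mod d")
    case True
    then have "(\<Sum>t<d. bell d (s, t) (i, j) (i', j'))
        = (\<Sum>t<d. cis (2 * pi * real (t * i) / real d) * cnj (cis (2 * pi * real (t * i') / real d)))
          / of_nat d"
      unfolding bell_entry[OF \<open>0 < d\<close>] sum_divide_distrib by (intro sum.cong) auto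
    then show ?thesis
      unfolding sum_cis_roots_of_unity[OF assms(1,3)] using True \<open>0 < d\<close> by simp
  next
    case False
    then show ?thesis unfolding bell_entry[OF \<open>0 < d\<close>] by (simp only: if_False sum.neutral_const)
  qed
  have "(\<Sum>y\<in>bell_labels d. bell d y (i, j) (i', j'))
      = (\<Sum>s<d. if i = (j + s) mod d \<and> i' = (j' + s) mod d then (if i = i' then 1 else 0) else 0)"
    unfolding sum_bell_labels inner ..
  also have "\<dots> = ident (i, j) (i', j')"
  proof (cases "i = i' \<and> j = j'")
    case True
    then show ?thesis using sum_shift_indicator[OF assms(1,2)] by (simp add: ident_def)
  next
    case False
    then have "(if i = (j + s) mod d \<and> i' = (j' + s) mod d then if i = i' then 1 else 0 else 0)
        = (0 :: complex)" for s
      using mod_add_right_cancel_nat[OF assms(2,4), of s] by auto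
    then show ?thesis using False by (simp add: ident_def)
  qed
  finally show ?thesis .
qed

text \<open>In the order of Complex_Order, \<open>0 \<le> z\<close> says that z is a nonnegative real number,
  which is exactly the condition imposed on quadratic forms by psd.\<close>
definition quad_form :: "'i set \<Rightarrow> 'i op \<Rightarrow> ('i \<Rightarrow> complex) \<Rightarrow> complex" where
  "quad_form S M v = (\<Sum>i\<in>S. \<Sum>j\<in>S. cnj (v i) * M i j * v j)"

lemma psd_iff_quad_form_nonneg: "psd S M \<longleftrightarrow> (\<forall>v. 0 \<le> quad_form S M v)"
  unfolding psd_def quad_form_def less_eq_complex_def by auto

lemma cnj_mult_self_nonneg: "0 \<le> cnj z * z"
  by (simp add: less_eq_complex_def)

lemma divide_nonneg_nonneg_complex:
  fixes z c :: complex
  assumes "0 \<le> z" "0 \<le> c"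
  shows "0 \<le> z / c"
proof -
  have "z = of_real (Re z)" "c = of_real (Re c)"
    using assms by (simp_all add: less_eq_complex_def complex_eq_iff)
  then have "z / c = of_real (Re z / Re c)" by (metis of_real_divide)
  then show ?thesis using assms by (simp add: less_eq_complex_def)
qed

lemma psd_add: "psd S M \<Longrightarrow> psd S N \<Longrightarrow> psd S (\<lambda>i j. M i j + N i j)"
  unfolding psd_iff_quad_form_nonneg quad_form_def
  by (simp add: algebra_simps sum.distrib add_nonneg_nonneg)

lemma psd_divide: "psd S M \<Longrightarrow> 0 \<le> c \<Longrightarrow> psd S (\<lambda>i j. M i j / c)"
proof -
  have "quad_form S (\<lambda>i j. M i j / c) v = quad_form S M v / c" for v
    by (simp add: quad_form_def sum_divide_distrib)
  then show "psd S M \<Longrightarrow> 0 \<le> c \<Longrightarrow> ?thesis"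
    unfolding psd_iff_quad_form_nonneg by (simp add: divide_nonneg_nonneg_complex)
qed

lemma psd_ident: "finite S \<Longrightarrow> psd S ident"
  unfolding psd_iff_quad_form_nonneg quad_form_def ident_def
  by (simp add: if_distrib sum_nonneg cnj_mult_self_nonneg cong: if_cong)

lemma psd_rank_one: "psd S (\<lambda>i j. x i * cnj (x j))"
  unfolding psd_iff_quad_form_nonneg
proof
  fix v
  define w where "w = (\<Sum>j\<in>S. cnj (x j) * v j)"
  have "quad_form S (\<lambda>i j. x i * cnj (x j)) v = (\<Sum>i\<in>S. cnj (v i) * x i) * w"
    unfolding quad_form_def w_def sum_product by (simp add: mult.assoc)
  also have "\<dots> = cnj w * w" unfolding w_def by (simp add: mult.commute)
  finally show "0 \<le> quad_form S (\<lambda>i j. x i * cnj (x j)) v" by (simp add: cnj_mult_self_nonneg)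
qed

lemma psd_bell: "psd S (bell d y)"
  unfolding bell_def by (rule psd_rank_one)

lemma quad_form_ext_AB:
  assumes "finite S"
  shows "quad_form (S \<times> S \<times> S) (ext_AB M) v = (\<Sum>e\<in>S. quad_form (S \<times> S) M (\<lambda>(a, b). v (a, b, e)))"
proof -
  have entry: "cnj (v (a, b, e)) * ext_AB M (a, b, e) (a', b', e') * v (a', b', e') =
      (if e' = e then cnj (v (a, b, e)) * M (a, b) (a', b') * v (a', b', e) else 0)" for a b e a' b' e'
    by (simp add: ext_AB_def ident_def)
  have "quad_form (S \<times> S \<times> S) (ext_AB M) v =
      (\<Sum>a\<in>S. \<Sum>b\<in>S. \<Sum>e\<in>S. \<Sum>a'\<in>S. \<Sum>b'\<in>S. cnj (v (a, b, e)) * M (a, b) (a', b') * v (a', b', e))"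
    unfolding quad_form_def sum.cartesian_product' entry using assms by simp
  also have "\<dots> = (\<Sum>e\<in>S. \<Sum>a\<in>S. \<Sum>b\<in>S. \<Sum>a'\<in>S. \<Sum>b'\<in>S. cnj (v (a, b, e)) * M (a, b) (a', b') * v (a', b', e))"
    by (subst sum.swap) (rule sum.cong[OF refl], rule sum.swap)
  also have "\<dots> = (\<Sum>e\<in>S. quad_form (S \<times> S) M (\<lambda>(a, b). v (a, b, e)))"
    unfolding quad_form_def sum.cartesian_product' by simp
  finally show ?thesis .
qed

lemma quad_form_ext_AE:
  assumes "finite S"
  shows "quad_form (S \<times> S \<times> S) (ext_AE M) v = (\<Sum>b\<in>S. quad_form (S \<times> S) M (\<lambda>(a, e). v (a, b, e)))"
proof -
  have entry: "cnj (v (a, b, e)) * ext_AE M (a, b, e) (a', b', e') * v (a', b', e') =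
      (if b' = b then cnj (v (a, b, e)) * M (a, e) (a', e') * v (a', b, e') else 0)" for a b e a' b' e'
    by (simp add: ext_AE_def ident_def)
  have sum_if_const: "(\<Sum>x\<in>A. if P then f x else 0) = (if P then sum f A else 0)" for P A f
    by (cases P) simp_all
  have "quad_form (S \<times> S \<times> S) (ext_AE M) v =
      (\<Sum>a\<in>S. \<Sum>b\<in>S. \<Sum>e\<in>S. \<Sum>a'\<in>S. \<Sum>e'\<in>S. cnj (v (a, b, e)) * M (a, e) (a', e') * v (a', b, e'))"
    unfolding quad_form_def sum.cartesian_product' entry using assms by (simp add: sum_if_const)
  also have "\<dots> = (\<Sum>b\<in>S. \<Sum>a\<in>S. \<Sum>e\<in>S. \<Sum>a'\<in>S. \<Sum>e'\<in>S. cnj (v (a, b, e)) * M (a, e) (a', e') * v (a', b, e'))"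
    by (rule sum.swap)
  also have "\<dots> = (\<Sum>b\<in>S. quad_form (S \<times> S) M (\<lambda>(a, e). v (a, b, e)))"
    unfolding quad_form_def sum.cartesian_product' by simp
  finally show ?thesis .
qed

lemma psd_ext_AB: "finite S \<Longrightarrow> psd (S \<times> S) M \<Longrightarrow> psd (S \<times> S \<times> S) (ext_AB M)"
  by (simp add: psd_iff_quad_form_nonneg quad_form_ext_AB sum_nonneg)

lemma psd_ext_AE: "finite S \<Longrightarrow> psd (S \<times> S) M \<Longrightarrow> psd (S \<times> S \<times> S) (ext_AE M)"
  by (simp add: psd_iff_quad_form_nonneg quad_form_ext_AE sum_nonneg)

lemma psd_bell_povm: "psd ({..<d} \<times> {..<d}) (bell_povm d y)"
  unfolding bell_povm_def
  by (intro psd_add psd_divide psd_bell psd_ident) (simp_all add: less_eq_complex_def)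

lemma is_POVM_bell_povm:
  assumes "0 < d"
  shows "is_POVM ({..<d} \<times> {..<d}) (bell_labels d) (bell_povm d)"
  unfolding is_POVM_def
proof (intro conjI ballI)
  show "finite (bell_labels d)" unfolding bell_labels_def by simp
  show "psd ({..<d} \<times> {..<d}) (bell_povm d y)" for y
    by (rule psd_bell_povm)
  fix i j assume "i \<in> {..<d} \<times> {..<d}" "j \<in> {..<d} \<times> {..<d}"
  then have "(\<Sum>y\<in>bell_labels d. bell d y i j) = ident i j"
    using sum_bell_eq_ident by auto
  then show "(\<Sum>y\<in>bell_labels d. bell_povm d y i j) = ident i j"
    using assms
    by (simp add: bell_povm_def sum.distrib card_bell_labels flip: sum_divide_distrib)
      (simp add: field_simps power2_eq_square)
qed

lemma sum_ext_AB_bell: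
  assumes "i \<in> {..<d} \<times> {..<d} \<times> {..<d}" "j \<in> {..<d} \<times> {..<d} \<times> {..<d}"
  shows "(\<Sum>y\<in>bell_labels d. ext_AB (bell d y) i j) = ident i j"
proof -
  obtain a b e a' b' e' where "i = (a, b, e)" "j = (a', b', e')" "a < d" "b < d" "a' < d" "b' < d"
    using assms by auto
  then show ?thesis
    by (simp add: ext_AB_def sum_bell_eq_ident flip: sum_distrib_right) (simp add: ident_def)
qed

lemma sum_ext_AE_bell:
  assumes "i \<in> {..<d} \<times> {..<d} \<times> {..<d}" "j \<in> {..<d} \<times> {..<d} \<times> {..<d}"
  shows "(\<Sum>y\<in>bell_labels d. ext_AE (bell d y) i j) = ident i j"
proof -
  obtain a b e a' b' e' where "i = (a, b, e)" "j = (a', b', e')" "a < d" "e < d" "a' < d" "e' < d"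
    using assms by auto
  then show ?thesis
    by (simp add: ext_AE_def sum_bell_eq_ident flip: sum_distrib_right) (simp add: ident_def)
qed

lemma psd_bell_ext: "psd ({..<d} \<times> {..<d} \<times> {..<d}) (bell_ext d y y')"
  unfolding bell_ext_def
  by (intro psd_add psd_divide psd_ext_AB psd_ext_AE psd_bell) (simp_all add: less_eq_complex_def)

lemma two_extension_bell_ext:
  assumes "0 < d"
  shows "two_extension d (bell_labels d) (bell_povm d) (bell_ext d)"
  unfolding two_extension_def
proof (intro conjI ballI)
  let ?S3 = "{..<d} \<times> {..<d} \<times> {..<d}"
  show "is_POVM ?S3 (bell_labels d \<times> bell_labels d) (\<lambda>(y, y'). bell_ext d y y')"
    unfolding is_POVM_def
  proof (intro conjI ballI)
    show "finite (bell_labels d \<times> bell_labels d)" unfolding bell_labels_def by simp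
    show "psd ?S3 ((\<lambda>(y, y'). bell_ext d y y') yy)" for yy
      using psd_bell_ext by (cases yy) simp
    fix i j assume "i \<in> ?S3" "j \<in> ?S3"
    then show "(\<Sum>yy\<in>bell_labels d \<times> bell_labels d. (\<lambda>(y, y'). bell_ext d y y') yy i j) = ident i j"
      using assms
      by (simp add: sum.cartesian_product' bell_ext_def sum.distrib card_bell_labels sum_ext_AB_bell
          sum_ext_AE_bell power2_eq_square flip: sum_divide_distrib sum_distrib_left)
  qed
  fix y i j assume "y \<in> bell_labels d" "i \<in> ?S3" "j \<in> ?S3"
  have "ext_AB (bell_povm d y) i j = ext_AB (bell d y) i j / 2 + ident i j / (2 * of_nat d ^ 2)"
    by (cases i; cases j) (simp add: ext_AB_def bell_povm_def ident_def)
  then show "(\<Sum>y'\<in>bell_labels d. bell_ext d y y' i j) = ext_AB (bell_povm d y) i j"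
    using assms \<open>i \<in> ?S3\<close> \<open>j \<in> ?S3\<close>
    by (simp add: bell_ext_def sum.distrib card_bell_labels sum_ext_AE_bell flip: sum_divide_distrib)
      (simp add: field_simps power2_eq_square)
next
  fix y y' i j
  show "swap_BE (bell_ext d y y') i j = bell_ext d y' y i j"
    unfolding swap_BE_def bell_ext_def ext_AB_def ext_AE_def
    by (cases i; cases j) (auto simp: algebra_simps)
qed

definition two_point_form :: "'i op \<Rightarrow> 'i \<Rightarrow> 'i \<Rightarrow> complex \<Rightarrow> complex \<Rightarrow> complex" where
  "two_point_form M p q \<alpha> \<beta> =
     cnj \<alpha> * M p p * \<alpha> + cnj \<alpha> * M p q * \<beta> + cnj \<beta> * M q p * \<alpha> + cnj \<beta> * M q q * \<beta>"

lemma quad_form_two_point: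
  assumes "finite S" "p \<in> S" "q \<in> S" "p \<noteq> q"
  shows "quad_form S M (\<lambda>i. if i = p then \<alpha> else if i = q then \<beta> else 0) = two_point_form M p q \<alpha> \<beta>"
proof -
  have sum_pq: "sum f S = f p + f q" if "\<And>i. i \<in> S \<Longrightarrow> i \<noteq> p \<Longrightarrow> i \<noteq> q \<Longrightarrow> f i = 0"
    for f :: "_ \<Rightarrow> complex"
  proof -
    have "sum f S = sum f {p, q}"
      using assms that by (intro sum.mono_neutral_right) auto
    then show ?thesis using assms(4) by simp
  qed
  let ?v = "\<lambda>i. if i = p then \<alpha> else if i = q then \<beta> else 0"
  have "(\<Sum>j\<in>S. cnj (?v i) * M i j * ?v j) = cnj (?v i) * M i p * \<alpha> + cnj (?v i) * M i q * \<beta>" for i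
    using assms(4) by (subst sum_pq) auto
  then have "quad_form S M ?v = (\<Sum>i\<in>S. cnj (?v i) * M i p * \<alpha> + cnj (?v i) * M i q * \<beta>)"
    unfolding quad_form_def by simp
  also have "\<dots> = two_point_form M p q \<alpha> \<beta>"
    using assms(4) by (subst sum_pq) (auto simp: two_point_form_def)
  finally show ?thesis .
qed

lemma psd_two_point_form_nonneg:
  "psd S M \<Longrightarrow> finite S \<Longrightarrow> p \<in> S \<Longrightarrow> q \<in> S \<Longrightarrow> p \<noteq> q \<Longrightarrow> 0 \<le> two_point_form M p q \<alpha> \<beta>"
  unfolding psd_iff_quad_form_nonneg by (metis quad_form_two_point)

lemma le_mult_of_quadratic_nonneg:
  fixes a e N :: real
  assumes "0 \<le> a" "\<And>t. 0 \<le> a * t\<^sup>2 * N - 2 * t * N + e"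
  shows "N \<le> a * e"
proof (cases "a = 0")
  case True
  show ?thesis
  proof (rule ccontr)
    assume "\<not> N \<le> a * e"
    then have "N > 0" using True by simp
    have "0 \<le> a * ((\<bar>e\<bar> + 1) / N)\<^sup>2 * N - 2 * ((\<bar>e\<bar> + 1) / N) * N + e" by (rule assms(2))
    also have "\<dots> = - 2 * (\<bar>e\<bar> + 1) + e" using True \<open>N > 0\<close> by simp
    finally show False by simp
  qed
next
  case False
  then have "a > 0" using assms(1) by simp
  have "0 \<le> a * (1 / a)\<^sup>2 * N - 2 * (1 / a) * N + e" by (rule assms(2))
  also have "\<dots> = e - N / a" using \<open>a > 0\<close> by (simp add: power2_eq_square field_simps)
  finally show ?thesis using \<open>a > 0\<close> by (simp add: field_simps)
qed

lemma psd_principal_2x2: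
  assumes "psd S M" "finite S" "p \<in> S" "q \<in> S" "p \<noteq> q"
  shows "0 \<le> M p p" "0 \<le> M q q" "M q p = cnj (M p q)"
    "(cmod (M p q))\<^sup>2 \<le> Re (M p p) * Re (M q q)"
proof -
  have form: "0 \<le> two_point_form M p q \<alpha> \<beta>" for \<alpha> \<beta>
    using psd_two_point_form_nonneg[OF assms] .
  show pp: "0 \<le> M p p" using form[of 1 0] by (simp add: two_point_form_def)
  show qq: "0 \<le> M q q" using form[of 0 1] by (simp add: two_point_form_def)
  have "Im (M p q) + Im (M q p) = 0" using form[of 1 1] pp qq
    by (simp add: two_point_form_def less_eq_complex_def)
  moreover have "Re (M p q) - Re (M q p) = 0" using form[of 1 \<i>] pp qq
    by (simp add: two_point_form_def less_eq_complex_def)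
  ultimately show herm: "M q p = cnj (M p q)" by (simp add: complex_eq_iff)
  have "0 \<le> Re (M p p) * t\<^sup>2 * (cmod (M p q))\<^sup>2 - 2 * t * (cmod (M p q))\<^sup>2 + Re (M q q)" for t :: real
    using form[of "- of_real t * M p q" 1] pp qq herm unfolding cmod_power2
    by (simp add: two_point_form_def less_eq_complex_def cmod_power2 power2_eq_square algebra_simps)
  then show "(cmod (M p q))\<^sup>2 \<le> Re (M p p) * Re (M q q)"
    using pp by (intro le_mult_of_quadratic_nonneg) (simp_all add: less_eq_complex_def)
qed

lemma two_point_form_ptrans_tensor_nonneg:
  assumes E: "psd A E" "finite A" "a1 \<in> A" "a2 \<in> A" "a1 \<noteq> a2"
    and F: "psd B F" "finite B" "b1 \<in> B" "b2 \<in> B" "b1 \<noteq> b2"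
  shows "0 \<le> Re (two_point_form (ptrans_B (\<lambda>(a, b) (a', b'). E a a' * F b b')) (a1, b1) (a2, b2) \<alpha> \<beta>)"
proof -
  note e = psd_principal_2x2[OF E] and f = psd_principal_2x2[OF F]
  have real_diag: "z = of_real (Re z)" if "0 \<le> z" for z
    using that by (simp add: less_eq_complex_def complex_eq_iff)
  have norm_sq: "cnj z * z = of_real ((cmod z)\<^sup>2)" for z
    by (metis complex_norm_square mult.commute)
  define X where "X = (cmod \<alpha>)\<^sup>2 * Re (E a1 a1) * Re (F b1 b1)"
  define Y where "Y = (cmod \<beta>)\<^sup>2 * Re (E a2 a2) * Re (F b2 b2)"
  define w where "w = cnj \<alpha> * \<beta> * E a1 a2 * F b2 b1"
  have "two_point_form (ptrans_B (\<lambda>(a, b) (a', b'). E a a' * F b b')) (a1, b1) (a2, b2) \<alpha> \<beta>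
      = (cnj \<alpha> * \<alpha>) * E a1 a1 * F b1 b1 + w + cnj w + (cnj \<beta> * \<beta>) * E a2 a2 * F b2 b2"
    unfolding two_point_form_def ptrans_B_def w_def using e(3) f(3) by (simp add: algebra_simps)
  also have "\<dots> = of_real X + w + cnj w + of_real Y"
    unfolding X_def Y_def norm_sq
    by (subst real_diag[OF e(1)], subst real_diag[OF e(2)], subst real_diag[OF f(1)],
        subst real_diag[OF f(2)]) simp
  finally have "Re (two_point_form (ptrans_B (\<lambda>(a, b) (a', b'). E a a' * F b b')) (a1, b1) (a2, b2) \<alpha> \<beta>)
      = X + Y + 2 * Re w"
    by simp
  moreover have "(cmod w)\<^sup>2 \<le> X * Y"
  proof -
    have "(cmod w)\<^sup>2 = (cmod \<alpha>)\<^sup>2 * (cmod \<beta>)\<^sup>2 * ((cmod (E a1 a2))\<^sup>2 * (cmod (F b2 b1))\<^sup>2)"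
      unfolding w_def by (simp add: norm_mult power_mult_distrib)
    also have "\<dots> \<le> (cmod \<alpha>)\<^sup>2 * (cmod \<beta>)\<^sup>2 *
        ((Re (E a1 a1) * Re (E a2 a2)) * (Re (F b1 b1) * Re (F b2 b2)))"
      using e f by (intro mult_left_mono mult_mono) (auto simp: less_eq_complex_def)
    finally show ?thesis unfolding X_def Y_def by (simp add: algebra_simps)
  qed
  moreover have "0 \<le> X" "0 \<le> Y"
    using e f unfolding X_def Y_def by (simp_all add: less_eq_complex_def)
  \<comment> \<open>so \<open>|Re w| \<le> \<surd>(XY) \<le> (X + Y) / 2\<close>\<close>
  ultimately show ?thesis
    using abs_Re_le_cmod[of w] real_sqrt_le_mono[of "(cmod w)\<^sup>2" "X * Y"] arith_geo_mean_sqrt[of X Y]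
    by simp
qed

lemma in_1WL_two_point_form_nonneg:
  assumes "in_1WL d Y P" "y \<in> Y" "a1 < d" "a2 < d" "a1 \<noteq> a2" "b1 < d" "b2 < d" "b1 \<noteq> b2"
  shows "0 \<le> Re (two_point_form (ptrans_B (P y)) (a1, b1) (a2, b2) \<alpha> \<beta>)"
proof -
  obtain X :: "nat set" and E F where
    E: "is_POVM {..<d} X E" and F: "\<forall>x\<in>X. is_POVM {..<d} Y (F x)"
    and P: "\<forall>y\<in>Y. \<forall>a\<in>{..<d}. \<forall>b\<in>{..<d}. \<forall>a'\<in>{..<d}. \<forall>b'\<in>{..<d}.
        P y (a, b) (a', b') = (\<Sum>x\<in>X. E x a a' * F x y b b')"
    using assms(1) unfolding in_1WL_def by blast
  have "two_point_form (ptrans_B (P y)) (a1, b1) (a2, b2) \<alpha> \<beta>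
      = (\<Sum>x\<in>X. two_point_form (ptrans_B (\<lambda>(a, b) (a', b'). E x a a' * F x y b b')) (a1, b1) (a2, b2) \<alpha> \<beta>)"
    using P assms(2-8)
    by (simp add: two_point_form_def ptrans_B_def sum.distrib sum_distrib_left algebra_simps)
  moreover have "psd {..<d} (E x)" "psd {..<d} (F x y)" if "x \<in> X" for x
    using E F that assms(2) unfolding is_POVM_def by auto
  ultimately show ?thesis
    using assms(3-8) by (auto intro!: sum_nonneg two_point_form_ptrans_tensor_nonneg)
qed

lemma two_point_form_ptrans_bell_povm_neg:
  assumes "2 \<le> d" "s < d"
  shows "\<exists>\<alpha> \<beta>. Re (two_point_form (ptrans_B (bell_povm d (s, t))) (s, 1) ((s + 1) mod d, 0) \<alpha> \<beta>) < 0"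
proof -
  have "0 < d" using assms by simp
  define q where "q = (s + 1) mod d"
  have "s \<noteq> q" using add_1_mod_neq_self[OF assms] unfolding q_def by simp
  define c where "c = bell_vec d (s, t) (s, 0) * cnj (bell_vec d (s, t) (q, 1))"
  have "c * cnj c = (bell_vec d (s, t) (s, 0) * cnj (bell_vec d (s, t) (s, 0))) *
      (bell_vec d (s, t) (q, 1) * cnj (bell_vec d (s, t) (q, 1)))"
    unfolding c_def by (simp add: algebra_simps)
  also have "\<dots> = 1 / of_nat d ^ 2"
    using assms \<open>0 < d\<close> by (simp add: bell_vec_mult_cnj q_def add.commute power2_eq_square)
  finally have cc: "c * cnj c = 1 / of_nat d ^ 2" .
  let ?M = "ptrans_B (bell_povm d (s, t))"
  have "bell_vec d (s, t) (s, 1) = 0" "bell_vec d (s, t) (q, 0) = 0"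
    using \<open>s \<noteq> q\<close> assms(2) unfolding bell_vec_def q_def by (simp_all add: add.commute)
  then have entries: "?M (s, 1) (s, 1) = 1 / (2 * of_nat d ^ 2)" "?M (q, 0) (q, 0) = 1 / (2 * of_nat d ^ 2)"
    "?M (s, 1) (q, 0) = c / 2" "?M (q, 0) (s, 1) = cnj c / 2"
    using \<open>s \<noteq> q\<close> unfolding ptrans_B_def bell_povm_def bell_def ident_def c_def
    by (simp_all add: mult.commute)
  have "two_point_form ?M (s, 1) (q, 0) 1 (- of_nat d * cnj c)
      = 1 / (2 * of_nat d ^ 2) - of_nat d * (c * cnj c) + of_nat d ^ 2 * (c * cnj c) / (2 * of_nat d ^ 2)"
    unfolding two_point_form_def entries by (simp add: algebra_simps power2_eq_square)
  also have "\<dots> = of_real (1 / real d ^ 2 - 1 / real d)"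
    unfolding cc using \<open>0 < d\<close> by (simp add: field_simps power2_eq_square)
  finally have "Re (two_point_form ?M (s, 1) (q, 0) 1 (- of_nat d * cnj c)) = 1 / real d ^ 2 - 1 / real d"
    by simp
  moreover have "1 / real d ^ 2 < 1 / real d"
    using assms by (simp add: power2_eq_square divide_strict_left_mono)
  ultimately have "Re (two_point_form ?M (s, 1) (q, 0) 1 (- of_nat d * cnj c)) < 0"
    by simp
  then show ?thesis unfolding q_def by blast
qed

lemma not_PPT_bell_povm:
  assumes "2 \<le> d" "y \<in> bell_labels d"
  shows "\<not> PPT ({..<d} \<times> {..<d}) (bell_povm d y)"
proof
  assume ppt: "PPT ({..<d} \<times> {..<d}) (bell_povm d y)"
  obtain s t where y: "y = (s, t)" "s < d" using assms(2) unfolding bell_labels_def by auto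
  obtain \<alpha> \<beta> where
    "Re (two_point_form (ptrans_B (bell_povm d (s, t))) (s, 1) ((s + 1) mod d, 0) \<alpha> \<beta>) < 0"
    using two_point_form_ptrans_bell_povm_neg[OF assms(1) y(2)] by blast
  moreover have "0 \<le> two_point_form (ptrans_B (bell_povm d (s, t))) (s, 1) ((s + 1) mod d, 0) \<alpha> \<beta>"
    using ppt y add_1_mod_neq_self[OF assms(1) y(2)] assms(1) unfolding PPT_def
    by (intro psd_two_point_form_nonneg) auto
  ultimately show False by (simp add: less_eq_complex_def)
qed

lemma not_in_1WL_bell_povm:
  assumes "2 \<le> d"
  shows "\<not> in_1WL d (bell_labels d) (bell_povm d)"
proof
  assume "in_1WL d (bell_labels d) (bell_povm d)"
  have "0 < d" using assms by simp
  obtain \<alpha> \<beta> where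
    "Re (two_point_form (ptrans_B (bell_povm d (0, 0))) (0, 1) ((0 + 1) mod d, 0) \<alpha> \<beta>) < 0"
    using two_point_form_ptrans_bell_povm_neg[OF assms \<open>0 < d\<close>] by blast
  moreover have "0 \<le> Re (two_point_form (ptrans_B (bell_povm d (0, 0))) (0, 1) ((0 + 1) mod d, 0) \<alpha> \<beta>)"
    using add_1_mod_neq_self[OF assms \<open>0 < d\<close>] \<open>0 < d\<close>
    by (intro in_1WL_two_point_form_nonneg[OF \<open>in_1WL d (bell_labels d) (bell_povm d)\<close>])
      (auto simp: bell_labels_def)
  ultimately show False by simp
qed

theorem mainTheorem5:
  fixes d :: nat
  assumes "d \<ge> 2"
  shows "is_POVM ({..<d} \<times> {..<d}) (bell_labels d) (bell_povm d)
    \<and> two_extension d (bell_labels d) (bell_povm d) (bell_ext d)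
    \<and> two_extendible d (bell_labels d) (bell_povm d)
    \<and> (\<forall>y\<in>bell_labels d. \<not> PPT ({..<d} \<times> {..<d}) (bell_povm d y))
    \<and> \<not> in_1WL d (bell_labels d) (bell_povm d)"
proof -
  have "0 < d" using assms by simp
  then have "two_extension d (bell_labels d) (bell_povm d) (bell_ext d)"
    by (rule two_extension_bell_ext)
  then show ?thesis
    using is_POVM_bell_povm[OF \<open>0 < d\<close>] not_PPT_bell_povm[OF assms] not_in_1WL_bell_povm[OF assms]
    unfolding two_extendible_def by blast
qed

end
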